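(* Let $G$ be a connected graph with $n$ vertices and matching number $k$, where $2\le k<\lfloor n/2\rfloor$. Then $\sigma_0(G)\ge 2-\frac kn$ and $\sigma_1(G)\ge 4n-3k$. In each bound, equality holds if and only if $G=K_k\vee\overline{K}_{n-k}$.
   Context: All graphs are finite, simple, undirected. For a connected graph $G$ and $u\in V(G)$, $\varepsilon_G(u)=\max_v d_G(u,v)$; $\sigma_0(G)=\frac1{|V(G)|}\sum_u\varepsilon_G(u)$, $\sigma_1(G)=\sum_u\varepsilon_G(u)^2$. The matching number is the maximum number of pairwise disjoint edges. $K_r$ is the complete graph, $\overline{K}_r$ the edgeless graph on $r$ vertices, and $G\vee H$ (the join) is obtained from the disjoint union of $G$ and $H$ by adding all edges between $V(G)$ and $V(H)$. *)

theory Defs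
  imports Main "HOL-Library.Extended_Nat" Complex_Main
begin

definition simple_graph :: "'a set \<Rightarrow> 'a set set \<Rightarrow> bool" where
  "simple_graph V E \<longleftrightarrow> finite V \<and> (\<forall>e\<in>E. \<exists>u v. u \<in> V \<and> v \<in> V \<and> u \<noteq> v \<and> e = {u, v})"

definition is_walk :: "'a set \<Rightarrow> 'a set set \<Rightarrow> 'a list \<Rightarrow> bool" where
  "is_walk V E xs \<longleftrightarrow> xs \<noteq> [] \<and> set xs \<subseteq> V \<and>
     (\<forall>i. Suc i < length xs \<longrightarrow> {xs ! i, xs ! Suc i} \<in> E)"

definition connected_graph :: "'a set \<Rightarrow> 'a set set \<Rightarrow> bool" where
  "connected_graph V E \<longleftrightarrow> V \<noteq> {} \<and>
     (\<forall>u\<in>V. \<forall>v\<in>V. \<exists>xs. is_walk V E xs \<and> hd xs = u \<and> last xs = v)"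

definition gdist :: "'a set \<Rightarrow> 'a set set \<Rightarrow> 'a \<Rightarrow> 'a \<Rightarrow> nat" where
  "gdist V E u v = (LEAST n. \<exists>xs. is_walk V E xs \<and> hd xs = u \<and> last xs = v \<and> length xs = Suc n)"

definition ecc :: "'a set \<Rightarrow> 'a set set \<Rightarrow> 'a \<Rightarrow> nat" where
  "ecc V E u = Max (gdist V E u ` V)"

definition sigma0 :: "'a set \<Rightarrow> 'a set set \<Rightarrow> real" where
  "sigma0 V E = (\<Sum>u\<in>V. real (ecc V E u)) / real (card V)"

definition sigma1 :: "'a set \<Rightarrow> 'a set set \<Rightarrow> nat" where
  "sigma1 V E = (\<Sum>u\<in>V. (ecc V E u)^2)"

definition is_matching :: "'a set set \<Rightarrow> 'a set set \<Rightarrow> bool" where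
  "is_matching E M \<longleftrightarrow> M \<subseteq> E \<and> (\<forall>e\<in>M. \<forall>f\<in>M. e \<noteq> f \<longrightarrow> e \<inter> f = {})"

definition matching_number :: "'a set set \<Rightarrow> nat" where
  "matching_number E = Max (card ` {M. is_matching E M})"

definition graph_iso :: "'a set \<Rightarrow> 'a set set \<Rightarrow> 'b set \<Rightarrow> 'b set set \<Rightarrow> bool" where
  "graph_iso V E W F \<longleftrightarrow> (\<exists>f. bij_betw f V W \<and>
     (\<forall>u\<in>V. \<forall>v\<in>V. {u, v} \<in> E \<longleftrightarrow> {f u, f v} \<in> F))"

text \<open>The join K_k \<or> (complement of K_m): vertices 0..k+m-1, vertices below k form the clique,
  the remaining m vertices are independent, and every clique vertex is joined to every other vertex.\<close>

definition join_vertices :: "nat \<Rightarrow> nat \<Rightarrow> nat set" where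
  "join_vertices k m = {0..<k+m}"

definition join_edges :: "nat \<Rightarrow> nat \<Rightarrow> nat set set" where
  "join_edges k m = {{i, j} | i j. i < k + m \<and> j < k + m \<and> i \<noteq> j \<and> (i < k \<or> j < k)}"

end

theory Submission
  imports Defs
begin

text \<open>Let \<open>D\<close> be the set of vertices adjacent to all other vertices. They have eccentricity 1,
  all other vertices have eccentricity at least 2, and exactly 2 once \<open>D \<noteq> {}\<close>. Hence
  \<open>\<Sum>\<^sub>u \<epsilon>(u) \<ge> 2n - |D|\<close> and \<open>\<Sum>\<^sub>u \<epsilon>(u)\<^sup>2 \<ge> 4n - 3|D|\<close>. Matching the vertices of \<open>D\<close> to distinct
  other vertices shows \<open>|D| \<le> k\<close> (here \<open>n \<ge> 2k + 2\<close> is used), which gives both bounds.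
  Equality forces \<open>|D| = k\<close>; then no edge joins two vertices outside \<open>D\<close>, since together with a
  matching of \<open>D\<close> into the remaining vertices it would give a matching of size \<open>k + 1\<close>.
  So \<open>G\<close> is the join of a \<open>k\<close>-clique with \<open>n - k\<close> independent vertices, and conversely that
  graph has exactly \<open>k\<close> dominating vertices.\<close>

lemma gdist_le_if_walk:
  assumes "is_walk V E xs" "hd xs = u" "last xs = v" "length xs = Suc m"
  shows "gdist V E u v \<le> m"
  unfolding gdist_def using assms by (intro Least_le) blast

lemma shortest_walk_exists:
  assumes "connected_graph V E" "u \<in> V" "v \<in> V"
  shows "\<exists>xs. is_walk V E xs \<and> hd xs = u \<and> last xs = v \<and> length xs = Suc (gdist V E u v)"
proof -
  obtain xs where xs: "is_walk V E xs" "hd xs = u" "last xs = v"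
    using assms unfolding connected_graph_def by blast
  then obtain m where "length xs = Suc m"
    unfolding is_walk_def by (cases xs) auto
  with xs have "\<exists>m xs. is_walk V E xs \<and> hd xs = u \<and> last xs = v \<and> length xs = Suc m"
    by blast
  then show ?thesis
    unfolding gdist_def by (rule LeastI_ex)
qed

lemma gdist_self: "u \<in> V \<Longrightarrow> gdist V E u u = 0"
  using gdist_le_if_walk[of V E "[u]" u u 0] by (simp add: is_walk_def)

lemma gdist_le_1_if_edge: "u \<in> V \<Longrightarrow> v \<in> V \<Longrightarrow> {u, v} \<in> E \<Longrightarrow> gdist V E u v \<le> 1"
  using gdist_le_if_walk[of V E "[u, v]" u v 1] by (simp add: is_walk_def less_Suc_eq)

lemma gdist_le_2_if_common_neighbour:
  "u \<in> V \<Longrightarrow> v \<in> V \<Longrightarrow> w \<in> V \<Longrightarrow> {u, w} \<in> E \<Longrightarrow> {w, v} \<in> E \<Longrightarrow> gdist V E u v \<le> 2"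
  using gdist_le_if_walk[of V E "[u, w, v]" u v 2] by (simp add: is_walk_def less_Suc_eq)

lemma gdist_ge_1_if_distinct:
  assumes "connected_graph V E" "u \<in> V" "v \<in> V" "u \<noteq> v"
  shows "1 \<le> gdist V E u v"
proof (rule ccontr)
  assume "\<not> ?thesis"
  with shortest_walk_exists[OF assms(1-3)] obtain xs where "hd xs = u" "last xs = v" "length xs = 1"
    by auto
  with assms(4) show False
    by (cases xs) auto
qed

lemma gdist_ge_2_if_not_adjacent:
  assumes "connected_graph V E" "u \<in> V" "v \<in> V" "u \<noteq> v" "{u, v} \<notin> E"
  shows "2 \<le> gdist V E u v"
proof (rule ccontr)
  assume "\<not> ?thesis"
  with gdist_ge_1_if_distinct[OF assms(1-4)] have "gdist V E u v = 1"
    by simp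
  with shortest_walk_exists[OF assms(1-3)] obtain xs
    where xs: "is_walk V E xs" "hd xs = u" "last xs = v" "length xs = 2"
    by auto
  then obtain a b where "xs = [a, b]"
    by (metis length_0_conv length_Suc_conv numeral_2_eq_2)
  with xs assms(5) show False
    unfolding is_walk_def by auto
qed

lemma ecc_ge_gdist: "finite V \<Longrightarrow> v \<in> V \<Longrightarrow> gdist V E u v \<le> ecc V E u"
  unfolding ecc_def by (rule Max_ge) auto

lemma ecc_le_if_gdist_le:
  "finite V \<Longrightarrow> V \<noteq> {} \<Longrightarrow> (\<And>v. v \<in> V \<Longrightarrow> gdist V E u v \<le> m) \<Longrightarrow> ecc V E u \<le> m"
  unfolding ecc_def by (subst Max_le_iff) auto

definition dominating_vertices :: "'a set \<Rightarrow> 'a set set \<Rightarrow> 'a set" where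
  "dominating_vertices V E = {u \<in> V. \<forall>v\<in>V. v \<noteq> u \<longrightarrow> {u, v} \<in> E}"

lemma ecc_dominating_vertex:
  assumes "finite V" "connected_graph V E" "2 \<le> card V" "u \<in> dominating_vertices V E"
  shows "ecc V E u = 1"
proof (rule antisym)
  have u: "u \<in> V"
    using assms(4) by (simp add: dominating_vertices_def)
  show "ecc V E u \<le> 1"
  proof (rule ecc_le_if_gdist_le[OF assms(1)])
    show "V \<noteq> {}"
      using u by blast
    show "gdist V E u v \<le> 1" if v: "v \<in> V" for v
      using assms(4) v u gdist_self[OF u] gdist_le_1_if_edge[OF u v]
      by (cases "v = u") (auto simp: dominating_vertices_def)
  qed
  have "card (V - {u}) \<noteq> 0"
    using assms(3) u by simp
  then obtain v where "v \<in> V" "v \<noteq> u"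
    by (metis Diff_iff card.empty equals0I insertI1)
  then show "1 \<le> ecc V E u"
    using gdist_ge_1_if_distinct[OF assms(2) u] ecc_ge_gdist[OF assms(1)] le_trans by metis
qed

lemma ecc_ge_2_if_not_dominating:
  assumes "finite V" "connected_graph V E" "u \<in> V - dominating_vertices V E"
  shows "2 \<le> ecc V E u"
proof -
  obtain v where v: "v \<in> V" "v \<noteq> u" "{u, v} \<notin> E"
    using assms(3) by (auto simp: dominating_vertices_def)
  moreover have "u \<in> V"
    using assms(3) by blast
  ultimately show ?thesis
    using gdist_ge_2_if_not_adjacent[OF assms(2)] ecc_ge_gdist[OF assms(1) v(1), of E u]
    by (metis le_trans)
qed

lemma ecc_le_2_if_dominating_vertex:
  assumes "finite V" "w \<in> dominating_vertices V E" "u \<in> V"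
  shows "ecc V E u \<le> 2"
proof (rule ecc_le_if_gdist_le[OF assms(1)])
  show "V \<noteq> {}"
    using assms(3) by blast
  have w: "w \<in> V" and adj: "\<And>v. v \<in> V \<Longrightarrow> v \<noteq> w \<Longrightarrow> {w, v} \<in> E"
    using assms(2) by (auto simp: dominating_vertices_def)
  fix v assume v: "v \<in> V"
  consider "v = u" | "u = w \<or> v = w" | "v \<noteq> u" "u \<noteq> w" "v \<noteq> w"
    by blast
  then show "gdist V E u v \<le> 2"
  proof cases
    case 1
    then show ?thesis
      using gdist_self[OF assms(3)] by simp
  next
    case 2
    then have "{u, v} \<in> E" if "v \<noteq> u"
      using adj assms(3) v that by (auto simp: insert_commute)
    then show ?thesis
      using gdist_self[OF assms(3), of E] gdist_le_1_if_edge[OF assms(3) v, of E]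
      by (cases "v = u") auto
  next
    case 3
    then show ?thesis
      using gdist_le_2_if_common_neighbour[OF assms(3) v w] adj[of u] adj[of v] assms(3) v
      by (simp add: insert_commute)
  qed
qed

lemma sum_ecc_split:
  fixes f :: "nat \<Rightarrow> nat"
  assumes "finite V" "connected_graph V E" "2 \<le> card V"
  shows "(\<Sum>u\<in>V. f (ecc V E u))
    = card (dominating_vertices V E) * f 1 + (\<Sum>u\<in>V - dominating_vertices V E. f (ecc V E u))"
proof -
  have "dominating_vertices V E \<subseteq> V"
    by (auto simp: dominating_vertices_def)
  with assms(1) show ?thesis
    using sum.subset_diff[of "dominating_vertices V E" V "\<lambda>u. f (ecc V E u)"]
      ecc_dominating_vertex[OF assms] by simp
qed

lemma card_diff_dominating:
  "finite V \<Longrightarrow> card (V - dominating_vertices V E) = card V - card (dominating_vertices V E)"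
  by (rule card_Diff_subset) (auto simp: dominating_vertices_def intro: finite_subset)

lemma sum_ecc_ge:
  fixes f :: "nat \<Rightarrow> nat"
  assumes "finite V" "connected_graph V E" "2 \<le> card V" "mono f"
  shows "card (dominating_vertices V E) * f 1 + (card V - card (dominating_vertices V E)) * f 2
    \<le> (\<Sum>u\<in>V. f (ecc V E u))"
proof -
  have "(\<Sum>u\<in>V - dominating_vertices V E. f 2) \<le> (\<Sum>u\<in>V - dominating_vertices V E. f (ecc V E u))"
    using ecc_ge_2_if_not_dominating[OF assms(1,2)] assms(4) by (intro sum_mono) (simp add: monoD)
  then show ?thesis
    using sum_ecc_split[OF assms(1-3)] card_diff_dominating[OF assms(1)] by simp
qed

lemma sum_ecc_eq_if_dominating_vertex:
  fixes f :: "nat \<Rightarrow> nat"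
  assumes "finite V" "connected_graph V E" "2 \<le> card V" "dominating_vertices V E \<noteq> {}"
  shows "(\<Sum>u\<in>V. f (ecc V E u))
    = card (dominating_vertices V E) * f 1 + (card V - card (dominating_vertices V E)) * f 2"
proof -
  have "ecc V E u = 2" if "u \<in> V - dominating_vertices V E" for u
    using ecc_ge_2_if_not_dominating[OF assms(1,2) that] ecc_le_2_if_dominating_vertex[OF assms(1)]
      assms(4) that by (meson DiffD1 all_not_in_conv antisym)
  then have "(\<Sum>u\<in>V - dominating_vertices V E. f (ecc V E u)) = (\<Sum>u\<in>V - dominating_vertices V E. f 2)"
    by simp
  then show ?thesis
    using sum_ecc_split[OF assms(1-3)] card_diff_dominating[OF assms(1)] by simp
qed

lemma card_le_matching_number:
  assumes "finite E" "is_matching E M"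
  shows "card M \<le> matching_number E"
proof -
  have "{M. is_matching E M} \<subseteq> Pow E"
    by (auto simp: is_matching_def)
  then have "finite {M. is_matching E M}"
    using assms(1) by (meson finite_Pow_iff finite_subset)
  then show ?thesis
    unfolding matching_number_def using assms(2) by (auto intro: Max_ge)
qed

lemma is_matching_pairs_union:
  assumes "A \<inter> W = {}" "bij_betw g A W" "\<forall>x\<in>A. {x, g x} \<in> E"
    and "is_matching E X" "\<forall>e\<in>X. e \<inter> (A \<union> W) = {}"
  shows "is_matching E ((\<lambda>x. {x, g x}) ` A \<union> X)"
  unfolding is_matching_def
proof (intro conjI ballI impI)
  have gW: "g x \<in> W" if "x \<in> A" for x
    using assms(2) that by (auto simp: bij_betw_def)
  show "(\<lambda>x. {x, g x}) ` A \<union> X \<subseteq> E"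
    using assms(3,4) by (auto simp: is_matching_def)
  fix e f
  assume e: "e \<in> (\<lambda>x. {x, g x}) ` A \<union> X" and f: "f \<in> (\<lambda>x. {x, g x}) ` A \<union> X" and "e \<noteq> f"
  show "e \<inter> f = {}"
  proof (cases "e \<in> X"; cases "f \<in> X")
    assume "e \<in> X" "f \<in> X"
    with \<open>e \<noteq> f\<close> assms(4) show ?thesis
      by (auto simp: is_matching_def)
  next
    assume "e \<in> X" "f \<notin> X"
    with f assms(5) gW show ?thesis
      by auto
  next
    assume "e \<notin> X" "f \<in> X"
    with e assms(5) gW show ?thesis
      by auto
  next
    assume "e \<notin> X" "f \<notin> X"
    with e f obtain x y where x: "x \<in> A" "e = {x, g x}" and y: "y \<in> A" "f = {y, g y}"
      by auto
    with \<open>e \<noteq> f\<close> have "x \<noteq> y"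
      by auto
    then have "g x \<noteq> g y"
      using bij_betw_imp_inj_on[OF assms(2)] x y by (meson inj_on_eq_iff)
    with \<open>x \<noteq> y\<close> x y gW assms(1) show ?thesis
      by auto
  qed
qed

lemma card_pairs_union:
  assumes "finite A" "finite X" "A \<inter> W = {}" "\<forall>x\<in>A. g x \<in> W" "\<forall>e\<in>X. e \<inter> A = {}"
  shows "card ((\<lambda>x. {x, g x}) ` A \<union> X) = card A + card X"
proof -
  have "inj_on (\<lambda>x. {x, g x}) A"
    using assms(3,4) by (auto intro!: inj_onI simp: doubleton_eq_iff)
  moreover have "(\<lambda>x. {x, g x}) ` A \<inter> X = {}"
    using assms(5) by auto
  ultimately show ?thesis
    using assms(1,2) by (simp add: card_Un_disjoint card_image)
qed

lemma card_dominating_add_matching_le: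
  assumes "finite E" "finite V" "A \<subseteq> dominating_vertices V E" "A \<inter> U = {}"
    and "card A \<le> card (V - A - U)" "is_matching E M" "finite M" "\<forall>e\<in>M. e \<subseteq> U"
  shows "card A + card M \<le> matching_number E"
proof -
  have "finite A"
    using assms(2,3) by (auto simp: dominating_vertices_def intro: finite_subset)
  obtain W where W: "W \<subseteq> V - A - U" "card W = card A"
    using assms(5) by (meson obtain_subset_with_card_n)
  then have "finite W"
    using assms(2) by (meson Diff_subset finite_subset)
  then obtain g where g: "bij_betw g A W"
    using finite_same_card_bij[OF \<open>finite A\<close>] W(2) by metis
  have gW: "\<forall>x\<in>A. g x \<in> W"
    using g by (auto simp: bij_betw_def)
  have "\<forall>x\<in>A. {x, g x} \<in> E"
  proof
    fix x assume "x \<in> A"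
    with gW W(1) have "g x \<in> V" "g x \<noteq> x"
      by auto
    with \<open>x \<in> A\<close> assms(3) show "{x, g x} \<in> E"
      by (auto simp: dominating_vertices_def)
  qed
  moreover have "A \<inter> W = {}" "\<forall>e\<in>M. e \<inter> (A \<union> W) = {}"
    using W(1) assms(4,8) by auto
  ultimately have "is_matching E ((\<lambda>x. {x, g x}) ` A \<union> M)"
    using is_matching_pairs_union[OF _ g _ assms(6)] by blast
  then have "card ((\<lambda>x. {x, g x}) ` A \<union> M) \<le> matching_number E"
    by (rule card_le_matching_number[OF assms(1)])
  moreover have "\<forall>e\<in>M. e \<inter> A = {}"
    using assms(4,8) by blast
  ultimately show ?thesis
    using card_pairs_union[OF \<open>finite A\<close> assms(7) \<open>A \<inter> W = {}\<close> gW] by simp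
qed

lemma card_dominating_le_matching_number:
  assumes "finite E" "finite V" "2 * matching_number E + 2 \<le> card V"
  shows "card (dominating_vertices V E) \<le> matching_number E"
proof (rule ccontr)
  assume "\<not> ?thesis"
  then obtain A where A: "A \<subseteq> dominating_vertices V E" "card A = Suc (matching_number E)"
    by (metis not_less_eq_eq obtain_subset_with_card_n)
  then have "A \<subseteq> V"
    by (auto simp: dominating_vertices_def)
  then have "card A \<le> card (V - A - {})"
    using A(2) assms(2,3) by (simp add: card_Diff_subset finite_subset)
  from card_dominating_add_matching_le[OF assms(1,2) A(1) _ this, of "{}"] A(2)
  show False
    by (simp add: is_matching_def)
qed

lemma non_dominating_independent:
  assumes "finite E" "finite V" "2 * matching_number E + 2 \<le> card V"
    and "card (dominating_vertices V E) = matching_number E"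
    and "u \<in> V - dominating_vertices V E" "v \<in> V - dominating_vertices V E" "u \<noteq> v"
  shows "{u, v} \<notin> E"
proof
  assume uv: "{u, v} \<in> E"
  let ?D = "dominating_vertices V E"
  have "card (V - ?D - {u, v}) = card V - card ?D - 2"
    using assms(2,5-7) card_diff_dominating[OF assms(2), of E] by (simp add: card_Diff_subset)
  then have "card ?D \<le> card (V - ?D - {u, v})"
    using assms(3,4) by simp
  moreover have "is_matching E {{u, v}}"
    using uv by (simp add: is_matching_def)
  ultimately have "card ?D + 1 \<le> matching_number E"
    using card_dominating_add_matching_le[OF assms(1,2) subset_refl, of "{u, v}" "{{u, v}}"] assms(5,6)
    by auto
  with assms(4) show False
    by simp
qed

lemma mem_join_edges_iff:
  "{i, j} \<in> join_edges k m \<longleftrightarrow> i < k + m \<and> j < k + m \<and> i \<noteq> j \<and> (i < k \<or> j < k)"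
  unfolding join_edges_def by (auto simp: doubleton_eq_iff)

lemma card_dominating_ge_if_iso_join:
  assumes "finite V" "graph_iso V E (join_vertices k m) (join_edges k m)"
  shows "k \<le> card (dominating_vertices V E)"
proof -
  obtain f where f: "bij_betw f V {0..<k + m}"
    and adj: "\<forall>u\<in>V. \<forall>v\<in>V. {u, v} \<in> E \<longleftrightarrow> {f u, f v} \<in> join_edges k m"
    using assms(2) unfolding graph_iso_def join_vertices_def by blast
  let ?C = "{u \<in> V. f u < k}"
  have inj: "inj_on f V"
    using f by (rule bij_betw_imp_inj_on)
  have "?C \<subseteq> dominating_vertices V E"
    using adj bij_betwE[OF f] inj by (auto simp: dominating_vertices_def mem_join_edges_iff inj_on_eq_iff)
  moreover have "f ` ?C = {0..<k}"
    using bij_betw_imp_surj_on[OF f] by force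
  then have "card ?C = k"
    using card_image[OF inj_on_subset[OF inj, of ?C]] by auto
  ultimately show ?thesis
    using assms(1) card_mono[of "dominating_vertices V E" ?C]
    by (metis (no_types, lifting) dominating_vertices_def finite_subset mem_Collect_eq subsetI)
qed

lemma bij_betw_atLeastLessThan_prefix:
  assumes "finite V" "A \<subseteq> V" "card A = k" "card V = k + m"
  obtains f where "bij_betw f V {0..<k + m}" "\<And>u. u \<in> V \<Longrightarrow> f u < k \<longleftrightarrow> u \<in> A"
proof -
  have "finite A"
    using assms(1,2) by (rule finite_subset[rotated])
  then obtain g1 where g1: "bij_betw g1 A {0..<k}"
    using finite_same_card_bij assms(3) by (metis card_atLeastLessThan diff_zero finite_atLeastLessThan)
  obtain g2 where g2: "bij_betw g2 (V - A) {k..<k + m}"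
    using finite_same_card_bij[of "V - A" "{k..<k + m}"] assms card_Diff_subset[OF \<open>finite A\<close>]
    by auto
  define f where "f x = (if x \<in> A then g1 x else g2 x)" for x
  have "bij_betw f A {0..<k}"
    using g1 by (rule bij_betw_cong[THEN iffD1, rotated]) (simp add: f_def)
  moreover have "bij_betw f (V - A) {k..<k + m}"
    using g2 by (rule bij_betw_cong[THEN iffD1, rotated]) (simp add: f_def)
  ultimately have "bij_betw f (A \<union> (V - A)) ({0..<k} \<union> {k..<k + m})"
    by (rule bij_betw_combine) auto
  moreover have "A \<union> (V - A) = V" "{0..<k} \<union> {k..<k + m} = {0..<k + m}"
    using assms(2) by auto
  ultimately have "bij_betw f V {0..<k + m}"
    by simp
  moreover have "f u < k \<longleftrightarrow> u \<in> A" if "u \<in> V" for u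
    using bij_betw_apply[OF g1, of u] bij_betw_apply[OF g2, of u] that
    by (cases "u \<in> A") (auto simp: f_def)
  ultimately show ?thesis
    using that by blast
qed

lemma iso_join_if_non_dominating_independent:
  assumes "simple_graph V E" "card V = k + m" "card (dominating_vertices V E) = k"
    and "\<And>u v. u \<in> V - dominating_vertices V E \<Longrightarrow> v \<in> V - dominating_vertices V E \<Longrightarrow> u \<noteq> v
      \<Longrightarrow> {u, v} \<notin> E"
  shows "graph_iso V E (join_vertices k m) (join_edges k m)"
proof -
  let ?D = "dominating_vertices V E"
  have "finite V"
    using assms(1) by (simp add: simple_graph_def)
  moreover have "?D \<subseteq> V"
    by (auto simp: dominating_vertices_def)
  ultimately obtain f where f: "bij_betw f V {0..<k + m}"
    and clique: "\<And>u. u \<in> V \<Longrightarrow> f u < k \<longleftrightarrow> u \<in> ?D"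
    using bij_betw_atLeastLessThan_prefix assms(2,3) by metis
  have "{u, v} \<in> E \<longleftrightarrow> {f u, f v} \<in> join_edges k m" if "u \<in> V" "v \<in> V" for u v
  proof (cases "u = v")
    case True
    then show ?thesis
      using assms(1) mem_join_edges_iff[of "f u" "f u" k m]
      by (auto simp: simple_graph_def doubleton_eq_iff)
  next
    case False
    then have "{f u, f v} \<in> join_edges k m \<longleftrightarrow> u \<in> ?D \<or> v \<in> ?D"
      using that clique bij_betwE[OF f] inj_onD[OF bij_betw_imp_inj_on[OF f]]
      by (auto simp: mem_join_edges_iff)
    also have "\<dots> \<longleftrightarrow> {u, v} \<in> E"
    proof
      show "u \<in> ?D \<or> v \<in> ?D \<Longrightarrow> {u, v} \<in> E"
        using that False by (auto simp: dominating_vertices_def insert_commute)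
      show "{u, v} \<in> E \<Longrightarrow> u \<in> ?D \<or> v \<in> ?D"
        using that False assms(4) by blast
    qed
    finally show ?thesis ..
  qed
  with f show ?thesis
    unfolding graph_iso_def join_vertices_def by blast
qed

lemma simple_graph_finite_edges:
  assumes "simple_graph V E"
  shows "finite E"
proof -
  have "E \<subseteq> Pow V"
    using assms by (auto simp: simple_graph_def)
  with assms show ?thesis
    by (meson finite_Pow_iff finite_subset simple_graph_def)
qed

lemma iso_join_iff_card_dominating:
  assumes "simple_graph V E" "2 * matching_number E + 2 \<le> card V"
  defines "k \<equiv> matching_number E"
  shows "graph_iso V E (join_vertices k (card V - k)) (join_edges k (card V - k))
    \<longleftrightarrow> card (dominating_vertices V E) = k"
proof -
  have fin: "finite V" "finite E"
    using assms(1) simple_graph_finite_edges by (auto simp: simple_graph_def)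
  have "card (dominating_vertices V E) \<le> k"
    unfolding k_def using card_dominating_le_matching_number[OF fin(2,1) assms(2)] .
  moreover have "card V = k + (card V - k)"
    using assms(2) unfolding k_def by simp
  ultimately show ?thesis
    using card_dominating_ge_if_iso_join[OF fin(1)] iso_join_if_non_dominating_independent[OF assms(1)]
      non_dominating_independent[OF fin(2,1) assms(2)] unfolding k_def by (metis le_antisym)
qed

lemma weighted_count_antimono:
  fixes a b d k n :: nat
  assumes "d \<le> k" "k \<le> n" "a < b"
  shows "k * a + (n - k) * b \<le> d * a + (n - d) * b"
    and "k * a + (n - k) * b = d * a + (n - d) * b \<longleftrightarrow> d = k"
proof -
  obtain t r where k: "k = d + t" and n: "n = d + t + r"
    using assms(1,2) by (metis le_Suc_ex)
  have "t * a \<le> t * b" "t * a = t * b \<longleftrightarrow> t = 0"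
    using assms(3) by auto
  then show "k * a + (n - k) * b \<le> d * a + (n - d) * b"
    and "k * a + (n - k) * b = d * a + (n - d) * b \<longleftrightarrow> d = k"
    unfolding k n by (simp_all add: algebra_simps)
qed

lemma sum_ecc_extremal:
  fixes f :: "nat \<Rightarrow> nat"
  assumes "simple_graph V E" "connected_graph V E" "1 \<le> matching_number E"
    and "2 * matching_number E + 2 \<le> card V" "strict_mono f"
  defines "k \<equiv> matching_number E"
  shows "k * f 1 + (card V - k) * f 2 \<le> (\<Sum>u\<in>V. f (ecc V E u))"
    and "(\<Sum>u\<in>V. f (ecc V E u)) = k * f 1 + (card V - k) * f 2
      \<longleftrightarrow> card (dominating_vertices V E) = k"
proof -
  let ?d = "card (dominating_vertices V E)"
  have fin: "finite V" "finite E"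
    using assms(1) simple_graph_finite_edges by (auto simp: simple_graph_def)
  have V2: "2 \<le> card V"
    using assms(4) by simp
  have dk: "?d \<le> k"
    unfolding k_def using card_dominating_le_matching_number[OF fin(2,1) assms(4)] .
  note weighted = weighted_count_antimono[OF dk _ strict_monoD[OF assms(5), of 1 2]]
  have d_bound: "?d * f 1 + (card V - ?d) * f 2 \<le> (\<Sum>u\<in>V. f (ecc V E u))"
    using sum_ecc_ge[OF fin(1) assms(2) V2 strict_mono_mono[OF assms(5)]] .
  have kV: "k \<le> card V"
    using assms(4) unfolding k_def by simp
  show "k * f 1 + (card V - k) * f 2 \<le> (\<Sum>u\<in>V. f (ecc V E u))"
    using weighted(1)[OF kV] d_bound by simp
  have "?d = k \<Longrightarrow> dominating_vertices V E \<noteq> {}"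
    using assms(3) fin(1) unfolding k_def by auto
  then show "(\<Sum>u\<in>V. f (ecc V E u)) = k * f 1 + (card V - k) * f 2 \<longleftrightarrow> ?d = k"
    using weighted[OF kV] d_bound sum_ecc_eq_if_dominating_vertex[OF fin(1) assms(2) V2] by force
qed

theorem proposition5p2:
  fixes V :: "'a set" and E :: "'a set set" and n k :: nat
  assumes "simple_graph V E" and "connected_graph V E"
    and "n = card V" and "k = matching_number E"
    and "2 \<le> k" and "k < n div 2"
  shows "sigma0 V E \<ge> 2 - real k / real n
    \<and> real (sigma1 V E) \<ge> 4 * real n - 3 * real k
    \<and> (sigma0 V E = 2 - real k / real n \<longleftrightarrow> graph_iso V E (join_vertices k (n - k)) (join_edges k (n - k)))
    \<and> (real (sigma1 V E) = 4 * real n - 3 * real k \<longleftrightarrow> graph_iso V E (join_vertices k (n - k)) (join_edges k (n - k)))"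
proof -
  have n: "2 * matching_number E + 2 \<le> card V" "1 \<le> matching_number E"
    using assms(3-6) by linarith+
  have sq: "strict_mono (\<lambda>x::nat. x ^ 2)"
    by (simp add: strict_mono_def power_strict_mono)
  note sum0 = sum_ecc_extremal[OF assms(1,2) n(2,1) strict_mono_id, folded assms(3,4)]
  note sum1 = sum_ecc_extremal[OF assms(1,2) n(2,1) sq, folded assms(3,4)]
  note iso = iso_join_iff_card_dominating[OF assms(1) n(1), folded assms(3,4)]
  define S0 where "S0 = (\<Sum>u\<in>V. ecc V E u)"
  define S1 where "S1 = (\<Sum>u\<in>V. (ecc V E u)\<^sup>2)"
  have "k \<le> n"
    using n assms(3,4) by simp
  then have bound0: "2 * real n - real k \<le> real S0"
      "real S0 = 2 * real n - real k \<longleftrightarrow> card (dominating_vertices V E) = k"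
    and bound1: "4 * real n - 3 * real k \<le> real S1"
      "real S1 = 4 * real n - 3 * real k \<longleftrightarrow> card (dominating_vertices V E) = k"
    using sum0 sum1 unfolding S0_def S1_def by (auto simp: of_nat_diff simp del: of_nat_sum)
  have "0 < n"
    using n assms(3) by simp
  moreover have "sigma0 V E = real S0 / real n" "real (sigma1 V E) = real S1"
    unfolding sigma0_def sigma1_def S0_def S1_def assms(3) by simp_all
  ultimately show ?thesis
    using bound0 bound1 iso by (simp add: field_simps)
qed

end
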